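(* Let $1\le p<\infty$. Let $(f_n)\subset L'^{\,p}$ with respective primitives $(F_n)\subset L^p$. Suppose there is a measurable function $F:\mathbb R\to\mathbb R$ such that $F_n\to F$ almost everywhere or in measure, and suppose there is $g\in L'^{\,p}$ such that $|f_n|\preceq g$ for all $n$. Then $F\in L^p$ (so $F'\in L'^{\,p}$) and $\lim_{n\to\infty}\|f_n-F'\|'_p=0$.
   Context: All function spaces are over $\mathbb R$ with Lebesgue measure. $L'^{\,p}=\{f\in\mathcal S' : f=F' \text{ (distributional derivative) for some } F\in L^p\}$; for $1\le p<\infty$ the $F\in L^p$ is unique and called the primitive of $f$; linear operations are defined through primitives and $\|f\|'_p:=\|F\|_p$. Order: $f\preceq g$ iff the primitives satisfy $F\le G$ a.e. For $f\in L'^{\,p}$ with primitive $F$, $|f|:=(|F|)'$ (the lattice absolute value). *)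

theory Defs
  imports "HOL-Analysis.Analysis"
begin

text \<open>Elements f of L'^p are represented by their (unique) primitives F in L^p
  (f = F'). All operations of L'^p are defined through primitives, so we define
  them directly on primitives.\<close>

definition Lp :: "real \<Rightarrow> (real \<Rightarrow> real) set" where
  "Lp p = {F. F \<in> borel_measurable lebesgue \<and> integrable lebesgue (\<lambda>x. \<bar>F x\<bar> powr p)}"

definition dnorm :: "real \<Rightarrow> (real \<Rightarrow> real) \<Rightarrow> real" where
  "dnorm p F = (\<integral>x. \<bar>F x\<bar> powr p \<partial>lebesgue) powr (1 / p)"

text \<open>Order on L'^p: f <= g iff primitives satisfy F <= G a.e.\<close>
definition dpreceq :: "(real \<Rightarrow> real) \<Rightarrow> (real \<Rightarrow> real) \<Rightarrow> bool" where
  "dpreceq F G \<longleftrightarrow> (AE x in lebesgue. F x \<le> G x)"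

text \<open>Lattice absolute value |f| := (|F|)' : primitive of |f| is |F|.\<close>
definition dabs :: "(real \<Rightarrow> real) \<Rightarrow> (real \<Rightarrow> real)" where
  "dabs F = (\<lambda>x. \<bar>F x\<bar>)"

definition dminus :: "(real \<Rightarrow> real) \<Rightarrow> (real \<Rightarrow> real) \<Rightarrow> (real \<Rightarrow> real)" where
  "dminus F G = (\<lambda>x. F x - G x)"

definition conv_in_measure :: "(nat \<Rightarrow> real \<Rightarrow> real) \<Rightarrow> (real \<Rightarrow> real) \<Rightarrow> bool" where
  "conv_in_measure Fs F \<longleftrightarrow>
     (\<forall>e>0. ((\<lambda>n. emeasure lebesgue {x. e < \<bar>Fs n x - F x\<bar>}) \<longlongrightarrow> 0) sequentially)"

end

theory Submission
  imports Defs
begin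

(* Dominated convergence in L'^p.
   Every operation of L'^p acts on primitives, so the theorem is a statement
   about primitives: if |F_n| <= G a.e. with G in L^p and F_n -> F a.e. or in
   measure, then F is in L^p and ||F_n - F||_p -> 0.
   (1) The bound passes to the limit, |F| <= G a.e.: pointwise in the a.e. case;
       in the in-measure case {|F| > G + e} lies, up to a null set, inside
       {|F_n - F| > e}, whose measure tends to 0.
   (2) Hence F is in L^p, and D_n = |F_n - F|^p is dominated by W = (2|G|)^p.
   (3) The integrals of D_n tend to 0: by dominated convergence in the a.e. case,
       and by a Vitali-type estimate D_n <= min(W,c) + (W - K)^+ + K 1_{D_n > c}
       in the in-measure case; taking p-th roots gives the norm statement. *)

lemma integral_min_const_tendsto_zero:
  fixes W :: "'a \<Rightarrow> real"
  assumes W: "integrable M W" and W_nonneg: "\<And>x. 0 \<le> W x"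
  shows "(\<lambda>k. \<integral>x. min (W x) (1 / Suc k) \<partial>M) \<longlonglongrightarrow> 0"
proof -
  have "(\<lambda>k. \<integral>x. min (W x) (1 / Suc k) \<partial>M) \<longlonglongrightarrow> (\<integral>x. 0 \<partial>M)"
  proof (rule integral_dominated_convergence[where w = W])
    show "AE x in M. (\<lambda>k. min (W x) (1 / Suc k)) \<longlonglongrightarrow> 0"
    proof (rule AE_I2)
      fix x
      have "(\<lambda>k. min (W x) (1 / real (Suc k))) \<longlonglongrightarrow> min (W x) 0"
        by (intro tendsto_min tendsto_const LIMSEQ_Suc[OF lim_1_over_n])
      then show "(\<lambda>k. min (W x) (1 / Suc k)) \<longlonglongrightarrow> 0"
        using W_nonneg[of x] by simp
    qed
  qed (use W W_nonneg in auto)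
  then show ?thesis by simp
qed

lemma integral_excess_tendsto_zero:
  fixes W :: "'a \<Rightarrow> real"
  assumes W: "integrable M W" and W_nonneg: "\<And>x. 0 \<le> W x"
  shows "(\<lambda>k. \<integral>x. max (W x - real k) 0 \<partial>M) \<longlonglongrightarrow> 0"
proof -
  have "(\<lambda>k. \<integral>x. max (W x - real k) 0 \<partial>M) \<longlonglongrightarrow> (\<integral>x. 0 \<partial>M)"
  proof (rule integral_dominated_convergence[where w = W])
    show "AE x in M. (\<lambda>k. max (W x - real k) 0) \<longlonglongrightarrow> 0"
    proof (rule AE_I2)
      fix x
      obtain N :: nat where "W x < N" using reals_Archimedean2 by blast
      then have "\<forall>k\<ge>N. max (W x - real k) 0 = 0" by auto
      then show "(\<lambda>k. max (W x - real k) 0) \<longlonglongrightarrow> 0"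
        by (intro tendsto_eventually) (auto simp: eventually_sequentially)
    qed
  qed (use W W_nonneg in auto)
  then show ?thesis by simp
qed

lemma integral_truncations_small:
  fixes W :: "'a \<Rightarrow> real"
  assumes "integrable M W" and "\<And>x. 0 \<le> W x" and "0 < r"
  obtains c K where "0 < c" and "0 \<le> K"
    and "(\<integral>x. min (W x) c \<partial>M) < r" and "(\<integral>x. max (W x - K) 0 \<partial>M) < r"
proof -
  obtain k1 where k1: "\<bar>\<integral>x. min (W x) (1 / Suc k1) \<partial>M\<bar> < r"
    using LIMSEQ_D[OF integral_min_const_tendsto_zero[OF assms(1,2)] \<open>0 < r\<close>] by auto
  obtain k2 where k2: "\<bar>\<integral>x. max (W x - real k2) 0 \<partial>M\<bar> < r"
    using LIMSEQ_D[OF integral_excess_tendsto_zero[OF assms(1,2)] \<open>0 < r\<close>] by auto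
  show ?thesis
    by (rule that[of "1 / Suc k1" "real k2"]) (use k1 k2 in auto)
qed

text \<open>The basic estimate behind it: a nonnegative function f dominated by W is
  at most c where f <= c, and at most (W - K)^+ + K where f > c.\<close>

lemma integral_le_truncation_split:
  fixes f W :: "'a \<Rightarrow> real"
  assumes f_meas[measurable]: "f \<in> borel_measurable M" and f_nonneg: "\<And>x. 0 \<le> f x"
    and f_dom: "AE x in M. f x \<le> W x"
    and W: "integrable M W" and W_nonneg: "\<And>x. 0 \<le> W x"
    and c: "0 < c" and K: "0 \<le> K"
    and A_fin: "emeasure M {x\<in>space M. c < f x} < \<infinity>"
  shows "(\<integral>x. f x \<partial>M) \<le> (\<integral>x. min (W x) c \<partial>M) + (\<integral>x. max (W x - K) 0 \<partial>M)
      + K * measure M {x\<in>space M. c < f x}"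
proof -
  define A where "A = {x\<in>space M. c < f x}"
  have [measurable]: "A \<in> sets M" unfolding A_def by measurable
  have [measurable]: "W \<in> borel_measurable M" using W by auto
  have int_f: "integrable M f"
    by (rule Bochner_Integration.integrable_bound[OF W f_meas]) (use f_dom f_nonneg in auto)
  have int_min: "integrable M (\<lambda>x. min (W x) c)"
    by (rule Bochner_Integration.integrable_bound[OF W]) (auto simp: W_nonneg c less_imp_le)
  have int_excess: "integrable M (\<lambda>x. max (W x - K) 0)"
    by (rule Bochner_Integration.integrable_bound[OF W]) (auto simp: W_nonneg K)
  have int_ind: "integrable M (\<lambda>x. K * indicator A x)"
    using A_fin by (intro integrable_mult_right integrable_real_indicator) (auto simp: A_def)
  have split: "AE x in M. f x \<le> min (W x) c + max (W x - K) 0 + K * indicator A x"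
    using f_dom AE_space
  proof eventually_elim
    case (elim x)
    have "min (W x) c \<ge> 0" "max (W x - K) 0 \<ge> W x - K" using W_nonneg[of x] c by auto
    then show ?case using elim by (cases "x \<in> A") (auto simp: A_def)
  qed
  have "(\<integral>x. f x \<partial>M) \<le> (\<integral>x. min (W x) c + max (W x - K) 0 + K * indicator A x \<partial>M)"
    using int_f int_min int_excess int_ind split by (intro integral_mono_AE) auto
  also have "\<dots> = (\<integral>x. min (W x) c \<partial>M) + (\<integral>x. max (W x - K) 0 \<partial>M) + K * measure M A"
    using int_min int_excess int_ind by simp
  finally show ?thesis by (simp add: A_def)
qed

text \<open>Vitali-type convergence theorem: nonnegative functions dominated by an
  integrable function and tending to 0 in measure have integrals tending to 0.
  Choose the truncation levels c, K first, then wait until {D n > c} is small.\<close>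

lemma integral_tendsto_zero_in_measure:
  fixes D :: "nat \<Rightarrow> 'a \<Rightarrow> real" and W :: "'a \<Rightarrow> real"
  assumes D_meas: "\<And>n. D n \<in> borel_measurable M"
    and D_nonneg: "\<And>n x. 0 \<le> D n x"
    and D_dom: "\<And>n. AE x in M. D n x \<le> W x"
    and W: "integrable M W" and W_nonneg: "\<And>x. 0 \<le> W x"
    and D_meas_conv: "\<And>c. 0 < c \<Longrightarrow> (\<lambda>n. emeasure M {x\<in>space M. c < D n x}) \<longlonglongrightarrow> 0"
  shows "(\<lambda>n. \<integral>x. D n x \<partial>M) \<longlonglongrightarrow> 0"
proof (rule LIMSEQ_I)
  fix r :: real assume "0 < r"
  then obtain c K where c: "0 < c" and K: "0 \<le> K"
    and small_min: "(\<integral>x. min (W x) c \<partial>M) < r / 3"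
    and small_excess: "(\<integral>x. max (W x - K) 0 \<partial>M) < r / 3"
    using integral_truncations_small[OF W W_nonneg, of "r / 3"] by auto
  define A where "A n = {x\<in>space M. c < D n x}" for n
  define \<delta> where "\<delta> = r / (3 * (K + 1))"
  have "0 < \<delta>" using \<open>0 < r\<close> K by (simp add: \<delta>_def)
  have "eventually (\<lambda>n. emeasure M (A n) < ennreal \<delta>) sequentially"
    using D_meas_conv[OF c] \<open>0 < \<delta>\<close> unfolding A_def by (intro order_tendstoD) auto
  then obtain N where N: "\<And>n. n \<ge> N \<Longrightarrow> emeasure M (A n) < ennreal \<delta>"
    by (auto simp: eventually_sequentially)
  show "\<exists>N. \<forall>n\<ge>N. norm ((\<integral>x. D n x \<partial>M) - 0) < r"
  proof (intro exI allI impI)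
    fix n assume "n \<ge> N"
    have A_fin: "emeasure M (A n) < \<infinity>"
      using N[OF \<open>n \<ge> N\<close>] by (auto intro: order.strict_trans)
    have "measure M (A n) < \<delta>"
      using N[OF \<open>n \<ge> N\<close>] A_fin \<open>0 < \<delta>\<close>
      by (simp add: emeasure_eq_ennreal_measure ennreal_less_iff)
    then have "K * measure M (A n) \<le> K * \<delta>"
      using K by (intro mult_left_mono) auto
    also have "K * \<delta> < r / 3"
      using K \<open>0 < r\<close> by (simp add: \<delta>_def field_simps)
    finally have "K * measure M (A n) < r / 3" .
    moreover have "(\<integral>x. D n x \<partial>M) \<le> (\<integral>x. min (W x) c \<partial>M) + (\<integral>x. max (W x - K) 0 \<partial>M)
        + K * measure M (A n)"
      using integral_le_truncation_split[OF D_meas D_nonneg D_dom W W_nonneg c K] A_fin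
      by (simp add: A_def)
    ultimately show "norm ((\<integral>x. D n x \<partial>M) - 0) < r"
      using small_min small_excess D_nonneg by simp
  qed
qed

lemma AE_bound_eps_of_tendsto_in_measure:
  fixes Fs :: "nat \<Rightarrow> 'a \<Rightarrow> real"
  assumes [measurable]: "\<And>n. Fs n \<in> borel_measurable M" "F \<in> borel_measurable M"
      "G \<in> borel_measurable M"
    and conv: "(\<lambda>n. emeasure M {x\<in>space M. e < \<bar>Fs n x - F x\<bar>}) \<longlonglongrightarrow> 0"
    and dom: "\<And>n. AE x in M. \<bar>Fs n x\<bar> \<le> G x"
  shows "AE x in M. \<bar>F x\<bar> \<le> G x + e"
proof -
  define B where "B = {x\<in>space M. G x + e < \<bar>F x\<bar>}"
  have "emeasure M B \<le> emeasure M {x\<in>space M. e < \<bar>Fs n x - F x\<bar>}" for n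
    by (rule emeasure_mono_AE) (use dom[of n] in \<open>auto simp: B_def\<close>)
  then have "emeasure M B \<le> 0"
    by (intro tendsto_le[OF sequentially_bot conv tendsto_const]) auto
  then have "AE x in M. x \<notin> B"
    by (intro AE_not_in) (auto simp: B_def)
  then show ?thesis using AE_space by eventually_elim (auto simp: B_def)
qed

text \<open>Letting e run through 1 / (k + 1) removes the slack.\<close>

lemma AE_bound_of_tendsto_in_measure:
  fixes Fs :: "nat \<Rightarrow> 'a \<Rightarrow> real"
  assumes [measurable]: "\<And>n. Fs n \<in> borel_measurable M" "F \<in> borel_measurable M"
      "G \<in> borel_measurable M"
    and conv: "\<And>e. 0 < e \<Longrightarrow> (\<lambda>n. emeasure M {x\<in>space M. e < \<bar>Fs n x - F x\<bar>}) \<longlonglongrightarrow> 0"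
    and dom: "\<And>n. AE x in M. \<bar>Fs n x\<bar> \<le> G x"
  shows "AE x in M. \<bar>F x\<bar> \<le> G x"
proof -
  have "AE x in M. \<bar>F x\<bar> \<le> G x + 1 / Suc k" for k
    by (rule AE_bound_eps_of_tendsto_in_measure[OF assms(1-3) conv dom]) simp
  then have "AE x in M. \<forall>k. \<bar>F x\<bar> \<le> G x + 1 / Suc k"
    by (simp add: AE_all_countable)
  then show ?thesis
  proof eventually_elim
    case (elim x)
    show ?case
    proof (rule field_le_epsilon)
      fix d :: real assume "0 < d"
      then obtain k where "1 / real (Suc k) < d"
        using reals_Archimedean[of d] by (metis inverse_eq_divide)
      then show "\<bar>F x\<bar> \<le> G x + d" using elim[rule_format, of k] by linarith
    qed
  qed
qed

lemma AE_bound_of_tendsto_AE: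
  fixes Fs :: "nat \<Rightarrow> 'a \<Rightarrow> real"
  assumes conv: "AE x in M. (\<lambda>n. Fs n x) \<longlonglongrightarrow> F x"
    and dom: "\<And>n. AE x in M. \<bar>Fs n x\<bar> \<le> G x"
  shows "AE x in M. \<bar>F x\<bar> \<le> G x"
proof -
  have "AE x in M. \<forall>n. \<bar>Fs n x\<bar> \<le> G x" using dom by (simp add: AE_all_countable)
  with conv show ?thesis
  proof eventually_elim
    case (elim x)
    have "(\<lambda>n. \<bar>Fs n x\<bar>) \<longlonglongrightarrow> \<bar>F x\<bar>" using elim(1) by (rule tendsto_rabs)
    then show ?case using elim(2) by (intro LIMSEQ_le_const2) auto
  qed
qed

lemma powr_distance_tendsto_zero:
  fixes f :: "nat \<Rightarrow> real"
  assumes "f \<longlonglongrightarrow> y" and "0 < p"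
  shows "(\<lambda>n. \<bar>f n - y\<bar> powr p) \<longlonglongrightarrow> 0"
proof -
  have "(\<lambda>n. \<bar>f n - y\<bar>) \<longlonglongrightarrow> 0"
    using assms(1) by (simp add: LIM_zero tendsto_rabs_zero)
  then show ?thesis using assms(2) by (intro tendsto_zero_powrI) auto
qed

lemma powr_distance_dominated:
  fixes f g G :: "'a \<Rightarrow> real"
  assumes p: "0 < p"
    and bound_f: "AE x in M. \<bar>f x\<bar> \<le> G x" and bound_g: "AE x in M. \<bar>g x\<bar> \<le> G x"
  shows "AE x in M. \<bar>f x - g x\<bar> powr p \<le> (2 * \<bar>G x\<bar>) powr p"
  using bound_f bound_g
proof eventually_elim
  case (elim x)
  then have "\<bar>f x - g x\<bar> \<le> 2 * \<bar>G x\<bar>" by linarith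
  then show ?case by (intro powr_mono2) (auto simp: p less_imp_le)
qed

lemma Lp_dominated:
  assumes p: "0 < p" and F: "F \<in> borel_measurable lebesgue" and G: "G \<in> Lp p"
    and dom: "AE x in lebesgue. \<bar>F x\<bar> \<le> G x"
  shows "F \<in> Lp p"
  unfolding Lp_def
proof (intro CollectI conjI F)
  have [measurable]: "G \<in> borel_measurable lebesgue" using G by (simp add: Lp_def)
  show "integrable lebesgue (\<lambda>x. \<bar>F x\<bar> powr p)"
  proof (rule Bochner_Integration.integrable_bound)
    show "integrable lebesgue (\<lambda>x. \<bar>G x\<bar> powr p)" using G by (simp add: Lp_def)
    show "(\<lambda>x. \<bar>F x\<bar> powr p) \<in> borel_measurable lebesgue" using F by measurable
    show "AE x in lebesgue. norm (\<bar>F x\<bar> powr p) \<le> norm (\<bar>G x\<bar> powr p)"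
      using dom by eventually_elim (auto intro!: powr_mono2 simp: p less_imp_le)
  qed
qed

lemma conv_in_measure_iff:
  "conv_in_measure Fs F \<longleftrightarrow>
    (\<forall>e>0. (\<lambda>n. emeasure lebesgue {x\<in>space lebesgue. e < \<bar>Fs n x - F x\<bar>}) \<longlonglongrightarrow> 0)"
  unfolding conv_in_measure_def by simp

lemma conv_in_measure_powr:
  assumes p: "0 < p" and conv: "conv_in_measure Fs F" and c: "0 < c"
  shows "(\<lambda>n. emeasure lebesgue {x\<in>space lebesgue. c < \<bar>Fs n x - F x\<bar> powr p}) \<longlonglongrightarrow> 0"
proof -
  have threshold: "c < \<bar>y\<bar> powr p \<longleftrightarrow> c powr (1 / p) < \<bar>y\<bar>" for y :: real
  proof
    assume "c < \<bar>y\<bar> powr p"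
    then have "c powr (1 / p) < (\<bar>y\<bar> powr p) powr (1 / p)"
      using c p by (intro powr_less_mono2) auto
    then show "c powr (1 / p) < \<bar>y\<bar>" using p by (simp add: powr_powr)
  next
    assume "c powr (1 / p) < \<bar>y\<bar>"
    then have "(c powr (1 / p)) powr p < \<bar>y\<bar> powr p"
      using p by (intro powr_less_mono2) auto
    then show "c < \<bar>y\<bar> powr p" using p c by (simp add: powr_powr)
  qed
  have "0 < c powr (1 / p)" using c by simp
  then show ?thesis
    using conv unfolding conv_in_measure_iff threshold by blast
qed

lemma Lp_double_powr_integrable:
  assumes "G \<in> Lp p"
  shows "integrable lebesgue (\<lambda>x. (2 * \<bar>G x\<bar>) powr p)"
proof -
  have "(\<lambda>x. (2 * \<bar>G x\<bar>) powr p) = (\<lambda>x. 2 powr p * \<bar>G x\<bar> powr p)"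
    by (auto simp: powr_mult)
  then show ?thesis using assms by (simp add: Lp_def)
qed

lemma AE_bound_of_limit:
  fixes Fs :: "nat \<Rightarrow> real \<Rightarrow> real"
  assumes [measurable]: "\<And>n. Fs n \<in> borel_measurable lebesgue" "F \<in> borel_measurable lebesgue"
      "G \<in> borel_measurable lebesgue"
    and conv: "(AE x in lebesgue. (\<lambda>n. Fs n x) \<longlonglongrightarrow> F x) \<or> conv_in_measure Fs F"
    and dom: "\<And>n. AE x in lebesgue. \<bar>Fs n x\<bar> \<le> G x"
  shows "AE x in lebesgue. \<bar>F x\<bar> \<le> G x"
  using conv
proof
  assume "AE x in lebesgue. (\<lambda>n. Fs n x) \<longlonglongrightarrow> F x"
  then show ?thesis using dom by (rule AE_bound_of_tendsto_AE)
next
  assume "conv_in_measure Fs F"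
  then have "(\<lambda>n. emeasure lebesgue {x\<in>space lebesgue. e < \<bar>Fs n x - F x\<bar>}) \<longlonglongrightarrow> 0"
    if "0 < e" for e
    using that unfolding conv_in_measure_iff by blast
  then show ?thesis by (rule AE_bound_of_tendsto_in_measure[OF assms(1-3) _ dom])
qed

lemma integral_powr_distance_tendsto_zero:
  fixes Fs :: "nat \<Rightarrow> real \<Rightarrow> real"
  assumes p: "0 < p" and [measurable]: "\<And>n. Fs n \<in> borel_measurable lebesgue"
      "F \<in> borel_measurable lebesgue"
    and conv: "(AE x in lebesgue. (\<lambda>n. Fs n x) \<longlonglongrightarrow> F x) \<or> conv_in_measure Fs F"
    and G: "G \<in> Lp p" and Fs_dom: "\<And>n. AE x in lebesgue. \<bar>Fs n x\<bar> \<le> G x"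
    and F_dom: "AE x in lebesgue. \<bar>F x\<bar> \<le> G x"
  shows "(\<lambda>n. \<integral>x. \<bar>Fs n x - F x\<bar> powr p \<partial>lebesgue) \<longlonglongrightarrow> 0"
proof -
  define W where "W x = (2 * \<bar>G x\<bar>) powr p" for x
  define D where "D n x = \<bar>Fs n x - F x\<bar> powr p" for n x
  have D_meas: "D n \<in> borel_measurable lebesgue" for n unfolding D_def by measurable
  have D_nonneg: "0 \<le> D n x" and W_nonneg: "0 \<le> W x" for n x by (simp_all add: D_def W_def)
  have W_int: "integrable lebesgue W"
    unfolding W_def by (rule Lp_double_powr_integrable[OF G])
  have D_dom: "AE x in lebesgue. D n x \<le> W x" for n
    unfolding D_def W_def by (rule powr_distance_dominated[OF p Fs_dom F_dom])
  have "(\<lambda>n. \<integral>x. D n x \<partial>lebesgue) \<longlonglongrightarrow> 0"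
    using conv
  proof
    assume "AE x in lebesgue. (\<lambda>n. Fs n x) \<longlonglongrightarrow> F x"
    then have D_pointwise: "AE x in lebesgue. (\<lambda>n. D n x) \<longlonglongrightarrow> 0"
      unfolding D_def by eventually_elim (rule powr_distance_tendsto_zero[OF _ p])
    have "(\<lambda>n. \<integral>x. D n x \<partial>lebesgue) \<longlonglongrightarrow> integral\<^sup>L lebesgue (\<lambda>x::real. 0::real)"
      by (rule integral_dominated_convergence[where w = W])
        (use D_pointwise D_meas D_dom D_nonneg W_int in auto)
    then show ?thesis by simp
  next
    assume "conv_in_measure Fs F"
    then show ?thesis
      using integral_tendsto_zero_in_measure[OF D_meas D_nonneg D_dom W_int W_nonneg]
        conv_in_measure_powr[OF p] by (simp add: D_def)
  qed
  then show ?thesis by (simp add: D_def)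
qed

theorem mainTheorem10:
  fixes p :: real and Fs :: "nat \<Rightarrow> real \<Rightarrow> real" and F G :: "real \<Rightarrow> real"
  assumes p: "1 \<le> p"
    and Fs: "\<And>n. Fs n \<in> Lp p"
    and F: "F \<in> borel_measurable lebesgue"
    and conv: "(AE x in lebesgue. (\<lambda>n. Fs n x) \<longlonglongrightarrow> F x) \<or> conv_in_measure Fs F"
    and G: "G \<in> Lp p"
    and dom: "\<And>n. dpreceq (dabs (Fs n)) G"
  shows "F \<in> Lp p \<and> (\<lambda>n. dnorm p (dminus (Fs n) F)) \<longlonglongrightarrow> 0"
proof -
  have p_pos: "0 < p" using p by simp
  have Fs_meas: "Fs n \<in> borel_measurable lebesgue" for n using Fs[of n] by (simp add: Lp_def)
  have G_meas: "G \<in> borel_measurable lebesgue" using G by (simp add: Lp_def)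
  have Fs_dom: "AE x in lebesgue. \<bar>Fs n x\<bar> \<le> G x" for n
    using dom[of n] by (simp add: dpreceq_def dabs_def)
  have F_dom: "AE x in lebesgue. \<bar>F x\<bar> \<le> G x"
    by (rule AE_bound_of_limit[OF Fs_meas F G_meas conv Fs_dom])
  have "(\<lambda>n. \<integral>x. \<bar>Fs n x - F x\<bar> powr p \<partial>lebesgue) \<longlonglongrightarrow> 0"
    by (rule integral_powr_distance_tendsto_zero[OF p_pos Fs_meas F conv G Fs_dom F_dom])
  then have "(\<lambda>n. (\<integral>x. \<bar>Fs n x - F x\<bar> powr p \<partial>lebesgue) powr (1 / p)) \<longlonglongrightarrow> 0"
    by (rule tendsto_zero_powrI[OF _ tendsto_const]) (auto simp: p_pos)
  then show ?thesis
    using Lp_dominated[OF p_pos F G F_dom] by (simp add: dnorm_def dminus_def)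
qed

end
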